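(* Let $n\ge2$, $K\geq1$, ${\mathcal{A}}\in\{0,1\}^{2K\times2K}$, and assume the reproducing kernel Hilbert space $\mathcal{H}$ defining $\|\cdot\|_{\mathcal{V}}$ is continuously embedded into $C_0^1(\mathbb{R}^d\times S^{d-1})$. Let $(c_m,\rho_m)_{m\in\mathbb{N}}$ be a sequence of weighted shape graphs with $c_m=(c_m^1,\dots,c_m^K)\in\operatorname{Graph}^n({\mathcal{A}})$ and $\rho_m=(\rho_m^1,\dots,\rho_m^K)$, $\rho_m^k\in BV([0,1],\mathbb{R}_+)$, such that for every $m$ and $k$, $c^k_m$ is a $C^1$ immersion, and $c^k_m$ converges uniformly, together with its derivative, to a $C^1$ immersion $c^k:[0,1]\to\mathbb{R}^d$. Assume also that for each $k$, $\rho^k_m$ converges in $L^1([0,1])$ to some $\rho^k\in BV([0,1],\mathbb{R}_+)$. Then, with $c=(c^1,\dots,c^K)$ and $\rho=(\rho^1,\dots,\rho^K)$, $\|\mu_{c_m,\rho_m}-\mu_{c,\rho}\|_{\mathcal{V}}\to0$ as $m\to\infty$.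
   Context: $\operatorname{Imm}^n([0,1],\mathbb{R}^d)$ is the set of $c\in H^n([0,1],\mathbb{R}^d)$ with $\partial_\theta c\neq0$ everywhere; $\operatorname{Graph}^n({\mathcal{A}})$ is the set of $c=(c^1,\dots,c^K)\in\prod_k\operatorname{Imm}^n([0,1],\mathbb{R}^d)$ with $c^k(0)=c^l(0)$ whenever ${\mathcal{A}}_{2k-1,2l-1}=1$, $c^k(1)=c^l(1)$ whenever ${\mathcal{A}}_{2k,2l}=1$, $c^k(0)=c^l(1)$ whenever ${\mathcal{A}}_{2k-1,2l}=1$. $BV([0,1],\mathbb{R}_+)$ is the space of nonnegative functions of bounded variation on $[0,1]$. Let $\mathcal{K}$ be a positive definite kernel on $\mathbb{R}^d\times S^{d-1}$ with RKHS $\mathcal{H}$; $C_0^1(\mathbb{R}^d\times S^{d-1})$ is the space of $C^1$ functions vanishing at infinity with their first derivatives, normed by $\|\omega\|_\infty+\|d\omega\|_\infty$. For a finite signed Radon measure $\mu$ on $\mathbb{R}^d\times S^{d-1}$, $\|\mu\|_{\mathcal{V}}=\sup_{\omega\in\mathcal{H},\|\omega\|_{\mathcal{H}}\le1}\int\omega\,d\mu$. For $c=(c^1,\dots,c^K)$ with $C^1$ immersion components and integrable weights $\rho=(\rho^1,\dots,\rho^K)$, $\mu_{c,\rho}$ is the measure with $\int\omega\,d\mu_{c,\rho}=\sum_{k=1}^K\int_0^1\rho^k(\theta)\,\omega\big(c^k(\theta),\partial_\theta c^k(\theta)/|\partial_\theta c^k(\theta)|\big)|\partial_\theta c^k(\theta)|\,d\theta$.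 *)

theory Defs
  imports "HOL-Analysis.Analysis"
begin

definition test_fun :: "(real \<Rightarrow> real) \<Rightarrow> bool" where
  "test_fun \<phi> \<longleftrightarrow> (\<forall>j x. (deriv ^^ j) \<phi> differentiable (at x))
     \<and> closure {x. \<phi> x \<noteq> 0} \<subseteq> {0<..<1}"

definition L2_on01 :: "(real \<Rightarrow> 'a::euclidean_space) \<Rightarrow> bool" where
  "L2_on01 f \<longleftrightarrow> set_borel_measurable lborel {0..1} f
     \<and> set_integrable lborel {0..1} (\<lambda>t. (norm (f t))^2)"

definition sobolev :: "nat \<Rightarrow> (real \<Rightarrow> 'a::euclidean_space) \<Rightarrow> bool" where
  "sobolev n f \<longleftrightarrow> (\<exists>g :: nat \<Rightarrow> real \<Rightarrow> 'a. g 0 = f \<and> (\<forall>j\<le>n. L2_on01 (g j))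
     \<and> (\<forall>j\<in>{1..n}. \<forall>\<phi>. test_fun \<phi> \<longrightarrow>
         (LINT t:{0..1}|lborel. ((deriv ^^ j) \<phi> t) *\<^sub>R f t)
           = ((-1)^j) *\<^sub>R (LINT t:{0..1}|lborel. \<phi> t *\<^sub>R g j t)))"

abbreviation dtheta :: "(real \<Rightarrow> 'a::real_normed_vector) \<Rightarrow> real \<Rightarrow> 'a" where
  "dtheta c t \<equiv> vector_derivative c (at t within {0..1})"

definition imm :: "nat \<Rightarrow> (real \<Rightarrow> 'a::euclidean_space) \<Rightarrow> bool" where
  "imm n c \<longleftrightarrow> sobolev n c \<and>
     (\<forall>t\<in>{0..1}. c differentiable (at t within {0..1}) \<and> dtheta c t \<noteq> 0)"

definition C1_immersion :: "(real \<Rightarrow> 'a::euclidean_space) \<Rightarrow> bool" where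
  "C1_immersion c \<longleftrightarrow> (\<forall>t\<in>{0..1}. c differentiable (at t within {0..1}) \<and> dtheta c t \<noteq> 0)
     \<and> continuous_on {0..1} (dtheta c)"

definition graph_n :: "nat \<Rightarrow> nat \<Rightarrow> (nat \<Rightarrow> nat \<Rightarrow> nat) \<Rightarrow> (nat \<Rightarrow> real \<Rightarrow> 'a::euclidean_space) \<Rightarrow> bool" where
  "graph_n n K A c \<longleftrightarrow> (\<forall>k\<in>{1..K}. imm n (c k)) \<and>
     (\<forall>k\<in>{1..K}. \<forall>l\<in>{1..K}.
        (A (2*k-1) (2*l-1) = 1 \<longrightarrow> c k 0 = c l 0) \<and>
        (A (2*k) (2*l) = 1 \<longrightarrow> c k 1 = c l 1) \<and>
        (A (2*k-1) (2*l) = 1 \<longrightarrow> c k 0 = c l 1))"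

definition BV_nonneg :: "(real \<Rightarrow> real) \<Rightarrow> bool" where
  "BV_nonneg f \<longleftrightarrow> (\<forall>t\<in>{0..1}. f t \<ge> 0) \<and>
     (\<exists>B. \<forall>ts::real list. sorted ts \<and> set ts \<subseteq> {0..1} \<longrightarrow>
        (\<Sum>i<length ts - 1. \<bar>f (ts ! Suc i) - f (ts ! i)\<bar>) \<le> B)"

definition Xsp :: "('a::euclidean_space \<times> 'a) set" where
  "Xsp = UNIV \<times> sphere 0 1"

definition pos_def_kernel :: "('a::euclidean_space \<times> 'a \<Rightarrow> 'a \<times> 'a \<Rightarrow> real) \<Rightarrow> bool" where
  "pos_def_kernel Kr \<longleftrightarrow> (\<forall>p\<in>Xsp. \<forall>q\<in>Xsp. Kr p q = Kr q p) \<and>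
     (\<forall>N (x :: nat \<Rightarrow> 'a \<times> 'a) (a :: nat \<Rightarrow> real). (\<forall>i<N. x i \<in> Xsp) \<longrightarrow>
        (\<Sum>i<N. \<Sum>j<N. a i * a j * Kr (x i) (x j)) \<ge> 0)"

text \<open>Hs with inner product ip is the RKHS of Kr: functions on Xsp (extended by 0 outside),
  a real Hilbert space containing the kernel sections, with the reproducing property.\<close>
definition kernel_section :: "('a::euclidean_space \<times> 'a \<Rightarrow> 'a \<times> 'a \<Rightarrow> real) \<Rightarrow> 'a \<times> 'a \<Rightarrow> ('a \<times> 'a \<Rightarrow> real)" where
  "kernel_section Kr p = (\<lambda>q. if q \<in> Xsp then Kr q p else 0)"

definition is_rkhs :: "('a::euclidean_space \<times> 'a \<Rightarrow> 'a \<times> 'a \<Rightarrow> real)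
    \<Rightarrow> ('a \<times> 'a \<Rightarrow> real) set \<Rightarrow> (('a \<times> 'a \<Rightarrow> real) \<Rightarrow> ('a \<times> 'a \<Rightarrow> real) \<Rightarrow> real) \<Rightarrow> bool" where
  "is_rkhs Kr Hs ip \<longleftrightarrow>
     (\<forall>f\<in>Hs. \<forall>q. q \<notin> Xsp \<longrightarrow> f q = 0) \<and>
     (\<lambda>_. 0) \<in> Hs \<and> (\<forall>f\<in>Hs. \<forall>g\<in>Hs. (\<lambda>q. f q + g q) \<in> Hs) \<and>
     (\<forall>f\<in>Hs. \<forall>r. (\<lambda>q. r * f q) \<in> Hs) \<and>
     (\<forall>f\<in>Hs. \<forall>g\<in>Hs. ip f g = ip g f) \<and>
     (\<forall>f\<in>Hs. \<forall>g\<in>Hs. \<forall>h\<in>Hs. \<forall>r s. ip (\<lambda>q. r * f q + s * g q) h = r * ip f h + s * ip g h) \<and>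
     (\<forall>f\<in>Hs. ip f f \<ge> 0 \<and> (ip f f = 0 \<longrightarrow> f = (\<lambda>_. 0))) \<and>
     (\<forall>u. (\<forall>m. u m \<in> Hs) \<longrightarrow>
        (\<forall>e>0. \<exists>N. \<forall>m\<ge>N. \<forall>m'\<ge>N. sqrt (ip (\<lambda>q. u m q - u m' q) (\<lambda>q. u m q - u m' q)) < e) \<longrightarrow>
        (\<exists>f\<in>Hs. (\<lambda>m. sqrt (ip (\<lambda>q. u m q - f q) (\<lambda>q. u m q - f q))) \<longlonglongrightarrow> 0)) \<and>
     (\<forall>p\<in>Xsp. kernel_section Kr p \<in> Hs) \<and>
     (\<forall>f\<in>Hs. \<forall>p\<in>Xsp. ip f (kernel_section Kr p) = f p)"

definition hnorm :: "(('a \<times> 'a \<Rightarrow> real) \<Rightarrow> ('a \<times> 'a \<Rightarrow> real) \<Rightarrow> real) \<Rightarrow> ('a \<times> 'a \<Rightarrow> real) \<Rightarrow> real" where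
  "hnorm ip f = sqrt (ip f f)"

text \<open>A function on R^d x S^{d-1} is handled through its 0-homogeneous extension in the
  second variable to the open set R^d x (R^d - {0}); the operator norm of the differential of
  this extension at (x,u), u in S^{d-1}, equals the norm of the differential of w on the
  tangent space R^d x u^perp.\<close>
definition hom_ext :: "('a::euclidean_space \<times> 'a \<Rightarrow> real) \<Rightarrow> 'a \<times> 'a \<Rightarrow> real" where
  "hom_ext w = (\<lambda>(x, v). w (x, (1 / norm v) *\<^sub>R v))"

definition Dw :: "('a::euclidean_space \<times> 'a \<Rightarrow> real) \<Rightarrow> 'a \<times> 'a \<Rightarrow> ('a \<times> 'a) \<Rightarrow>\<^sub>L real" where
  "Dw w p = Blinfun (frechet_derivative (hom_ext w) (at p))"

definition C01 :: "('a::euclidean_space \<times> 'a \<Rightarrow> real) \<Rightarrow> bool" where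
  "C01 w \<longleftrightarrow>
     (\<forall>p\<in>UNIV \<times> (UNIV - {0}). hom_ext w differentiable (at p)) \<and>
     continuous_on (UNIV \<times> (UNIV - {0})) (Dw w) \<and>
     (\<forall>e>0. \<exists>R. \<forall>x u. (x, u) \<in> Xsp \<and> norm x \<ge> R \<longrightarrow>
         \<bar>w (x, u)\<bar> \<le> e \<and> norm (Dw w (x, u)) \<le> e)"

definition C01_norm :: "('a::euclidean_space \<times> 'a \<Rightarrow> real) \<Rightarrow> real" where
  "C01_norm w = (SUP p\<in>Xsp. \<bar>w p\<bar>) + (SUP p\<in>Xsp. norm (Dw w p))"

definition cont_embedded_C01 :: "('a::euclidean_space \<times> 'a \<Rightarrow> real) set
    \<Rightarrow> (('a \<times> 'a \<Rightarrow> real) \<Rightarrow> ('a \<times> 'a \<Rightarrow> real) \<Rightarrow> real) \<Rightarrow> bool" where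
  "cont_embedded_C01 Hs ip \<longleftrightarrow> (\<exists>C. \<forall>w\<in>Hs. C01 w \<and> C01_norm w \<le> C * hnorm ip w)"

text \<open>Action of mu_{c,rho} on a test function w.\<close>
definition mu_int :: "nat \<Rightarrow> (nat \<Rightarrow> real \<Rightarrow> 'a::euclidean_space) \<Rightarrow> (nat \<Rightarrow> real \<Rightarrow> real)
    \<Rightarrow> ('a \<times> 'a \<Rightarrow> real) \<Rightarrow> real" where
  "mu_int K c \<rho> w = (\<Sum>k\<in>{1..K}. LINT t:{0..1}|lborel.
      \<rho> k t * w (c k t, (1 / norm (dtheta (c k) t)) *\<^sub>R dtheta (c k) t) * norm (dtheta (c k) t))"

definition V_dist :: "('a \<times> 'a \<Rightarrow> real) set \<Rightarrow> (('a \<times> 'a \<Rightarrow> real) \<Rightarrow> ('a \<times> 'a \<Rightarrow> real) \<Rightarrow> real)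
    \<Rightarrow> (('a \<times> 'a \<Rightarrow> real) \<Rightarrow> real) \<Rightarrow> (('a \<times> 'a \<Rightarrow> real) \<Rightarrow> real) \<Rightarrow> real" where
  "V_dist Hs ip I1 I2 = Sup {I1 w - I2 w | w. w \<in> Hs \<and> hnorm ip w \<le> 1}"

end

theory Submission
  imports Defs
begin

text \<open>The unit ball of the RKHS is bounded in \<open>C\<^sub>0\<^sup>1\<close>, say by \<open>B\<close>. Hence every
  test function \<open>w\<close> in it satisfies \<open>|w| \<le> B\<close> and, by the mean value inequality for its
  0-homogeneous extension, is \<open>3 B\<close>-Lipschitz between nearby points of \<open>\<real>\<^sup>d \<times> S\<^sup>d\<^sup>-\<^sup>1\<close>.
  If \<open>c'\<close> is \<open>\<eta>\<close>-close to \<open>c\<close> in \<open>C\<^sup>1\<close> and \<open>a \<le> |\<partial>c| \<le> M\<close>, the integrands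
  \<open>\<rho>' w(c', \<partial>c'/|\<partial>c'|) |\<partial>c'|\<close> and \<open>\<rho> w(c, \<partial>c/|\<partial>c|) |\<partial>c|\<close> therefore differ by at most
  \<open>B (M + 1) |\<rho>' - \<rho>| + O(\<eta>) \<rho>\<close>. Integrating, the difference of the two measures tested
  against \<open>w\<close> is bounded uniformly on the unit ball by a quantity that tends to 0 along the
  sequence, and so does the supremum defining the kernel norm.\<close>

section \<open>Functions of bounded variation on \<open>[0, 1]\<close>\<close>

definition variation_sum :: "(real \<Rightarrow> real) \<Rightarrow> real list \<Rightarrow> real" where
  "variation_sum f ts = (\<Sum>i<length ts - 1. \<bar>f (ts ! Suc i) - f (ts ! i)\<bar>)"

lemma variation_sum_snoc:
  assumes "ts \<noteq> []"
  shows "variation_sum f (ts @ [a]) = variation_sum f ts + \<bar>f a - f (last ts)\<bar>"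
proof -
  obtain n where n: "length ts = Suc n" using assms by (cases ts) auto
  have "variation_sum f (ts @ [a]) = (\<Sum>i<Suc n. \<bar>f ((ts @ [a]) ! Suc i) - f ((ts @ [a]) ! i)\<bar>)"
    unfolding variation_sum_def using n by simp
  also have "\<dots> = (\<Sum>i<n. \<bar>f (ts ! Suc i) - f (ts ! i)\<bar>) + \<bar>f a - f (last ts)\<bar>"
    using n assms by (simp add: nth_append last_conv_nth)
  finally show ?thesis unfolding variation_sum_def n by simp
qed

lemma variation_sum_append_pair:
  "variation_sum f ts + \<bar>f t - f s\<bar> \<le> variation_sum f (ts @ [s, t])"
proof (cases "ts = []")
  case True
  then show ?thesis by (simp add: variation_sum_def)
next
  case False
  have "variation_sum f (ts @ [s, t]) = variation_sum f ts + \<bar>f s - f (last ts)\<bar> + \<bar>f t - f s\<bar>"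
    using variation_sum_snoc[of "ts @ [s]" f t] variation_sum_snoc[OF False, of f s] by simp
  then show ?thesis by simp
qed

definition bounded_variation_01 :: "(real \<Rightarrow> real) \<Rightarrow> bool" where
  "bounded_variation_01 f \<longleftrightarrow>
     (\<exists>V. \<forall>ts. sorted ts \<and> set ts \<subseteq> {0..1} \<longrightarrow> variation_sum f ts \<le> V)"

lemma BV_nonneg_iff: "BV_nonneg f \<longleftrightarrow> (\<forall>t\<in>{0..1}. 0 \<le> f t) \<and> bounded_variation_01 f"
  unfolding BV_nonneg_def bounded_variation_01_def variation_sum_def ..

definition variation :: "(real \<Rightarrow> real) \<Rightarrow> real \<Rightarrow> real" where
  "variation f t = Sup (variation_sum f ` {ts. sorted ts \<and> set ts \<subseteq> {0..t}})"

lemma variation_add_abs_diff_le: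
  assumes "bounded_variation_01 f" "0 \<le> s" "s \<le> t" "t \<le> 1"
  shows "variation f s + \<bar>f t - f s\<bar> \<le> variation f t"
proof -
  obtain V where V: "\<And>ts. sorted ts \<Longrightarrow> set ts \<subseteq> {0..1} \<Longrightarrow> variation_sum f ts \<le> V"
    using assms(1) unfolding bounded_variation_01_def by blast
  have bdd: "bdd_above (variation_sum f ` {ts. sorted ts \<and> set ts \<subseteq> {0..t}})"
    using assms(4) by (intro bdd_aboveI[of _ V]) (auto intro!: V)
  have "variation f s \<le> variation f t - \<bar>f t - f s\<bar>"
    unfolding variation_def
  proof (rule cSup_least)
    show "variation_sum f ` {ts. sorted ts \<and> set ts \<subseteq> {0..s}} \<noteq> {}"
      by (auto intro: exI[of _ "[]"])
    fix x assume "x \<in> variation_sum f ` {ts. sorted ts \<and> set ts \<subseteq> {0..s}}"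
    then obtain ts where ts: "sorted ts" "set ts \<subseteq> {0..s}" and x: "x = variation_sum f ts"
      by auto
    have "sorted (ts @ [s, t]) \<and> set (ts @ [s, t]) \<subseteq> {0..t}"
      using ts assms(2,3) by (auto simp: sorted_append)
    then have "variation_sum f (ts @ [s, t]) \<le> Sup (variation_sum f ` {ts. sorted ts \<and> set ts \<subseteq> {0..t}})"
      by (intro cSup_upper[OF _ bdd]) auto
    then show "x \<le> Sup (variation_sum f ` {ts. sorted ts \<and> set ts \<subseteq> {0..t}}) - \<bar>f t - f s\<bar>"
      using variation_sum_append_pair[of f ts t s] x by linarith
  qed
  then show ?thesis by linarith
qed

lemma bounded_variation_01_bounded:
  assumes "bounded_variation_01 f"
  obtains M where "\<And>t. t \<in> {0..1} \<Longrightarrow> \<bar>f t\<bar> \<le> M"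
proof -
  obtain V where V: "\<And>ts. sorted ts \<Longrightarrow> set ts \<subseteq> {0..1} \<Longrightarrow> variation_sum f ts \<le> V"
    using assms unfolding bounded_variation_01_def by blast
  have "\<bar>f t\<bar> \<le> \<bar>f 0\<bar> + V" if "t \<in> {0..1}" for t
    using V[of "[0, t]"] that by (simp add: variation_sum_def)
  then show ?thesis using that by blast
qed

text \<open>Jordan decomposition: on \<open>[0, 1]\<close>, \<open>f\<close> is the difference of the monotone functions
  \<open>variation f\<close> and \<open>variation f - f\<close>, extended constantly outside \<open>[0, 1]\<close>.\<close>
lemma bounded_variation_01_measurable:
  assumes "bounded_variation_01 f"
  shows "set_borel_measurable lborel {0..1} f"
proof -
  define clamp :: "real \<Rightarrow> real" where "clamp t = max 0 (min 1 t)" for t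
  have clamp: "0 \<le> clamp t" "clamp t \<le> 1" "s \<le> t \<Longrightarrow> clamp s \<le> clamp t" for s t
    unfolding clamp_def by auto
  have incr: "variation f (clamp s) + \<bar>f (clamp t) - f (clamp s)\<bar> \<le> variation f (clamp t)"
    if "s \<le> t" for s t
    using variation_add_abs_diff_le[OF assms] clamp[of s] clamp[of t] clamp(3)[OF that] by blast
  have "mono (\<lambda>t. variation f (clamp t))"
    by (rule monoI) (use incr in \<open>smt (verit)\<close>)
  moreover have "mono (\<lambda>t. variation f (clamp t) - f (clamp t))"
    by (rule monoI) (use incr in \<open>smt (verit)\<close>)
  ultimately have "(\<lambda>t. variation f (clamp t) - (variation f (clamp t) - f (clamp t))) \<in> borel_measurable borel"
    by (intro borel_measurable_diff borel_measurable_mono)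
  then have meas: "(\<lambda>t. f (clamp t)) \<in> borel_measurable borel"
    by simp
  have eq: "indicator {0..1} t *\<^sub>R f t = indicator {0..1} t *\<^sub>R f (clamp t)" for t :: real
    by (cases "t \<in> {0..1}") (auto simp: clamp_def)
  show ?thesis
    unfolding set_borel_measurable_def eq using meas by measurable
qed

lemma bounded_variation_01_mult_continuous_integrable:
  assumes "bounded_variation_01 r" "continuous_on {0..1} g"
  shows "set_integrable lborel {0..1} (\<lambda>t. r t * g t)"
proof -
  obtain M where M: "\<And>t. t \<in> {0..1} \<Longrightarrow> \<bar>r t\<bar> \<le> M"
    using bounded_variation_01_bounded[OF assms(1)] by blast
  have "compact (g ` {0..1})"
    by (rule compact_continuous_image[OF assms(2)]) simp
  then obtain G where G: "\<And>t. t \<in> {0..1} \<Longrightarrow> \<bar>g t\<bar> \<le> G"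
    by (metis bounded_iff compact_imp_bounded image_eqI real_norm_def)
  have g: "set_borel_measurable lborel {0..1} g"
    using borel_measurable_continuous_on_indicator[OF _ assms(2)]
    unfolding set_borel_measurable_def by simp
  have eq: "indicator {0..1} t *\<^sub>R (r t * g t)
      = (indicator {0..1} t *\<^sub>R r t) * (indicator {0..1} t *\<^sub>R g t)" for t :: real
    by (simp split: split_indicator)
  have meas: "set_borel_measurable lborel {0..1} (\<lambda>t. r t * g t)"
    using bounded_variation_01_measurable[OF assms(1)] g unfolding set_borel_measurable_def eq
    by (rule borel_measurable_times)
  have bound: "set_integrable lborel {0..1::real} (\<lambda>_. M * G)"
    by (rule borel_integrable_atLeastAtMost') simp
  show ?thesis
  proof (rule set_integrable_bound[OF bound meas], rule AE_I2, intro impI)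
    fix t :: real assume t: "t \<in> {0..1}"
    have "\<bar>r t\<bar> * \<bar>g t\<bar> \<le> M * G"
      using M[OF t] G[OF t] by (intro mult_mono) auto
    then show "norm (r t * g t) \<le> norm (M * G)"
      by (metis abs_ge_self abs_mult order_trans real_norm_def)
  qed
qed

section \<open>Test functions in \<open>C\<^sub>0\<^sup>1\<close>\<close>

lemma hom_ext_Xsp: "p \<in> Xsp \<Longrightarrow> hom_ext w p = w p"
  by (cases p) (auto simp: hom_ext_def Xsp_def)

lemma hom_ext_scaleR:
  assumes "r > 0"
  shows "hom_ext w (x, r *\<^sub>R v) = hom_ext w (x, v)"
  using assms by (simp add: hom_ext_def abs_of_pos)

lemma C01_has_derivative:
  assumes "C01 w" "snd p \<noteq> 0"
  shows "(hom_ext w has_derivative blinfun_apply (Dw w p)) (at p)"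
proof -
  have "hom_ext w differentiable (at p)"
    using assms unfolding C01_def by (cases p) auto
  then have "(hom_ext w has_derivative frechet_derivative (hom_ext w) (at p)) (at p)"
    using frechet_derivative_works by blast
  then show ?thesis
    unfolding Dw_def by (simp add: bounded_linear_Blinfun_apply has_derivative_bounded_linear)
qed

lemma C01_continuous_on_hom_ext:
  assumes "C01 w"
  shows "continuous_on (UNIV \<times> (UNIV - {0})) (hom_ext w)"
  using assms unfolding C01_def
  by (auto intro!: continuous_at_imp_continuous_on differentiable_imp_continuous_within)

lemma C01_continuous_on_Xsp:
  assumes "C01 w"
  shows "continuous_on Xsp w"
proof -
  have "continuous_on Xsp (hom_ext w)"
    by (rule continuous_on_subset[OF C01_continuous_on_hom_ext[OF assms]]) (auto simp: Xsp_def)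
  then show ?thesis
    by (rule continuous_on_cong[THEN iffD1, rotated 2]) (auto simp: hom_ext_Xsp)
qed

lemma bdd_above_norm_Xsp:
  fixes g :: "'a::euclidean_space \<times> 'a \<Rightarrow> 'b::real_normed_vector"
  assumes cont: "continuous_on (UNIV \<times> (UNIV - {0})) g"
    and far: "\<And>x u. (x, u) \<in> Xsp \<Longrightarrow> R \<le> norm x \<Longrightarrow> norm (g (x, u)) \<le> b"
  shows "bdd_above ((\<lambda>p. norm (g p)) ` Xsp)"
proof -
  let ?C = "cball (0::'a) R \<times> sphere (0::'a) 1"
  have "compact (g ` ?C)"
    by (intro compact_continuous_image continuous_on_subset[OF cont] compact_Times) auto
  then obtain b' where b': "\<And>p. p \<in> ?C \<Longrightarrow> norm (g p) \<le> b'"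
    by (meson bounded_iff compact_imp_bounded image_eqI)
  show ?thesis
  proof (rule bdd_aboveI2)
    fix p :: "'a \<times> 'a" assume p: "p \<in> Xsp"
    obtain x u where xu: "p = (x, u)" by (cases p)
    show "norm (g p) \<le> max b b'"
    proof (cases "R \<le> norm x")
      case True then show ?thesis using far p xu by fastforce
    next
      case False then show ?thesis using b'[of p] p xu by (auto simp: Xsp_def)
    qed
  qed
qed

lemma C01_bdd_above:
  assumes "C01 w"
  shows "bdd_above ((\<lambda>p. \<bar>w p\<bar>) ` Xsp)" and "bdd_above ((\<lambda>p. norm (Dw w p)) ` Xsp)"
proof -
  obtain R where R: "\<And>x u. (x, u) \<in> Xsp \<Longrightarrow> R \<le> norm x \<Longrightarrow> \<bar>w (x, u)\<bar> \<le> 1 \<and> norm (Dw w (x, u)) \<le> 1"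
    using assms unfolding C01_def by (meson zero_less_one)
  have "bdd_above ((\<lambda>p. norm (hom_ext w p)) ` Xsp)"
    using R by (intro bdd_above_norm_Xsp[OF C01_continuous_on_hom_ext[OF assms]]) (auto simp: hom_ext_Xsp)
  then show "bdd_above ((\<lambda>p. \<bar>w p\<bar>) ` Xsp)"
    by (simp add: hom_ext_Xsp cong: image_cong)
  show "bdd_above ((\<lambda>p. norm (Dw w p)) ` Xsp)"
    using R assms unfolding C01_def by (intro bdd_above_norm_Xsp) auto
qed

lemma
  assumes "C01 w" "C01_norm w \<le> B" "p \<in> Xsp"
  shows C01_abs_le: "\<bar>w p\<bar> \<le> B" and C01_norm_Dw_le: "norm (Dw w p) \<le> B"
proof -
  have "\<bar>w p\<bar> \<le> (SUP p\<in>Xsp. \<bar>w p\<bar>)" "norm (Dw w p) \<le> (SUP p\<in>Xsp. norm (Dw w p))"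
    using assms(3) C01_bdd_above[OF assms(1)] by (auto intro: cSUP_upper)
  moreover have "0 \<le> \<bar>w p\<bar>" "0 \<le> norm (Dw w p)"
    by auto
  ultimately show "\<bar>w p\<bar> \<le> B" "norm (Dw w p) \<le> B"
    using assms(2) unfolding C01_norm_def by linarith+
qed

lemma closed_segment_snd_norm_ge:
  fixes u1 u2 :: "'a::real_normed_vector"
  assumes "norm u1 = 1" "norm u2 = 1" "norm (u1 - u2) \<le> 1"
    and "p \<in> closed_segment (x1, u1) (x2, u2)"
  shows "1/2 \<le> norm (snd p)"
proof -
  obtain t where t: "0 \<le> t" "t \<le> 1" and p: "snd p = (1 - t) *\<^sub>R u1 + t *\<^sub>R u2"
    using assms(4) unfolding closed_segment_def by auto
  show ?thesis
  proof (cases "t \<le> 1/2")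
    case True
    have "t * norm (u1 - u2) \<le> 1/2 * 1"
      by (rule mult_mono) (use True t assms(3) in auto)
    then have "norm (t *\<^sub>R (u1 - u2)) \<le> 1/2"
      using t by simp
    moreover have "snd p = u1 - t *\<^sub>R (u1 - u2)"
      unfolding p by (simp add: algebra_simps)
    ultimately show ?thesis
      using norm_triangle_ineq2[of u1 "t *\<^sub>R (u1 - u2)"] assms(1) by simp
  next
    case False
    have "(1 - t) * norm (u1 - u2) \<le> 1/2 * 1"
      by (rule mult_mono) (use False t assms(3) in auto)
    then have "norm ((1 - t) *\<^sub>R (u1 - u2)) \<le> 1/2"
      using t by simp
    moreover have "snd p = u2 + (1 - t) *\<^sub>R (u1 - u2)"
      unfolding p by (simp add: algebra_simps)
    ultimately show ?thesis
      using norm_diff_ineq[of u2 "(1 - t) *\<^sub>R (u1 - u2)"] assms(2) by simp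
  qed
qed

text \<open>Mean value inequality for \<open>hom_ext w\<close> on the segment, which stays at distance \<open>1/2\<close>
  from \<open>v = 0\<close>: at \<open>(x, v)\<close> its derivative is \<open>Dw w (x, v/|v|)\<close> composed with
  \<open>(h, k) \<mapsto> (h, k/|v|)\<close>, whose norm is at most \<open>3 B\<close>.\<close>
lemma C01_lipschitz:
  fixes w :: "'a::euclidean_space \<times> 'a \<Rightarrow> real"
  assumes w: "C01 w" "C01_norm w \<le> B" and X: "(x1, u1) \<in> Xsp" "(x2, u2) \<in> Xsp"
    and u: "norm (u1 - u2) \<le> 1"
  shows "\<bar>w (x1, u1) - w (x2, u2)\<bar> \<le> 3 * B * (norm (x1 - x2) + norm (u1 - u2))"
proof -
  have B: "0 \<le> B" using C01_abs_le[OF w X(1)] by linarith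
  define S where "S = closed_segment (x1, u1) (x2, u2)"
  have unit: "norm u1 = 1" "norm u2 = 1"
    using X by (auto simp: Xsp_def)
  have far: "1/2 \<le> norm (snd p)" if "p \<in> S" for p
    using closed_segment_snd_norm_ge[OF unit u] that unfolding S_def by blast
  define q where "q p = (fst p, (1 / norm (snd p)) *\<^sub>R snd p)" for p :: "'a \<times> 'a"
  have qX: "q p \<in> Xsp" if "p \<in> S" for p
  proof -
    have "0 < norm (snd p)" using far[OF that] by linarith
    then show ?thesis unfolding q_def Xsp_def by auto
  qed
  define L where "L p hk = (fst hk, (1 / norm (snd p)) *\<^sub>R snd hk)" for p hk :: "'a \<times> 'a"
  have deriv: "(hom_ext w has_derivative (\<lambda>hk. Dw w (q p) (L p hk))) (at p within S)"
    if "p \<in> S" for p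
  proof -
    have "0 < norm (snd p)" using far[OF that] by linarith
    then have r: "0 < 1 / norm (snd p)" by simp
    have q: "snd (q p) \<noteq> 0" using qX[OF that] by (auto simp: Xsp_def)
    have "((\<lambda>z. (fst z, (1 / norm (snd p)) *\<^sub>R snd z)) has_derivative L p) (at p within S)"
      unfolding L_def by (auto intro!: derivative_eq_intros)
    moreover have "(hom_ext w has_derivative Dw w (q p)) (at (q p))"
      by (rule C01_has_derivative[OF w(1) q])
    ultimately have "((\<lambda>z. hom_ext w (fst z, (1 / norm (snd p)) *\<^sub>R snd z))
        has_derivative (\<lambda>hk. Dw w (q p) (L p hk))) (at p within S)"
      unfolding q_def by (rule has_derivative_compose)
    then show ?thesis
      using hom_ext_scaleR[OF r, of w] by simp
  qed
  have onorm: "onorm (\<lambda>hk. Dw w (q p) (L p hk)) \<le> 3 * B" if "p \<in> S" for p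
  proof (rule onorm_le)
    fix hk :: "'a \<times> 'a"
    have hk: "norm (fst hk) \<le> norm hk" "norm (snd hk) \<le> norm hk"
      using norm_fst_le[of "fst hk" "snd hk"] norm_snd_le[of "snd hk" "fst hk"] by auto
    have "1 / norm (snd p) \<le> 2" using far[OF that] by (simp add: divide_le_eq)
    then have "(1 / norm (snd p)) * norm (snd hk) \<le> 2 * norm hk"
      using hk by (intro mult_mono) auto
    then have "norm ((1 / norm (snd p)) *\<^sub>R snd hk) \<le> 2 * norm hk"
      by simp
    then have "norm (L p hk) \<le> 3 * norm hk"
      using norm_Pair_le[of "fst hk" "(1 / norm (snd p)) *\<^sub>R snd hk"] hk unfolding L_def by linarith
    moreover have "norm (Dw w (q p)) \<le> B"
      using C01_norm_Dw_le[OF w qX[OF that]] .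
    ultimately have "norm (Dw w (q p)) * norm (L p hk) \<le> B * (3 * norm hk)"
      using B by (intro mult_mono) auto
    then show "norm (Dw w (q p) (L p hk)) \<le> 3 * B * norm hk"
      using norm_blinfun[of "Dw w (q p)" "L p hk"] by simp
  qed
  have "norm (hom_ext w (x1, u1) - hom_ext w (x2, u2)) \<le> 3 * B * norm ((x1, u1) - (x2, u2))"
    by (rule differentiable_bound[OF _ deriv onorm]) (auto simp: S_def)
  also have "\<dots> \<le> 3 * B * (norm (x1 - x2) + norm (u1 - u2))"
    using norm_Pair_le[of "x1 - x2" "u1 - u2"] B by (intro mult_left_mono) auto
  finally show ?thesis
    using hom_ext_Xsp[OF X(1), of w] hom_ext_Xsp[OF X(2), of w] by simp
qed

section \<open>Stability of the measure of one weighted curve\<close>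

lemma scaleR_inverse_norm_eq_sgn: "(1 / norm v) *\<^sub>R v = sgn v"
  by (simp add: sgn_div_norm divide_inverse_commute)

lemma norm_sgn_diff_le:
  fixes u v :: "'a::real_normed_vector"
  assumes "u \<noteq> 0" "v \<noteq> 0"
  shows "norm (sgn u - sgn v) \<le> 2 * norm (u - v) / norm v"
proof -
  have "1 / norm u - 1 / norm v = (norm v - norm u) / (norm u * norm v)"
    using assms by (simp add: field_simps)
  moreover have "sgn u - sgn v = (1 / norm v) *\<^sub>R (u - v) + (1 / norm u - 1 / norm v) *\<^sub>R u"
    unfolding scaleR_inverse_norm_eq_sgn[symmetric] by (simp add: algebra_simps)
  ultimately have eq: "sgn u - sgn v
      = (1 / norm v) *\<^sub>R (u - v) + ((norm v - norm u) / (norm u * norm v)) *\<^sub>R u"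
    by simp
  have "norm (((norm v - norm u) / (norm u * norm v)) *\<^sub>R u) = \<bar>norm v - norm u\<bar> / norm v"
    using assms by (simp add: abs_mult field_simps)
  also have "\<dots> \<le> norm (u - v) / norm v"
    using norm_triangle_ineq3[of v u] by (simp add: divide_right_mono norm_minus_commute)
  finally show ?thesis
    unfolding eq using norm_triangle_ineq[of "(1 / norm v) *\<^sub>R (u - v)"
      "((norm v - norm u) / (norm u * norm v)) *\<^sub>R u"] by simp
qed

definition varifold_density :: "('a::real_normed_vector \<times> 'a \<Rightarrow> real) \<Rightarrow> 'a \<Rightarrow> 'a \<Rightarrow> real" where
  "varifold_density w x v = w (x, sgn v) * norm v"

lemma varifold_density_abs_le:
  assumes "C01 w" "C01_norm w \<le> B" "v \<noteq> 0"
  shows "\<bar>varifold_density w x v\<bar> \<le> B * norm v"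
  using C01_abs_le[OF assms(1,2), of "(x, sgn v)"] assms(3)
  by (simp add: varifold_density_def Xsp_def norm_sgn abs_mult mult_right_mono)

lemma varifold_density_diff_le:
  fixes w :: "'a::euclidean_space \<times> 'a \<Rightarrow> real"
  assumes w: "C01 w" "C01_norm w \<le> B"
    and x: "norm (x' - x) \<le> \<eta>" and v: "norm (v' - v) \<le> \<eta>" and "\<eta> \<le> 1" "2 * \<eta> \<le> a"
    and a: "0 < a" "a \<le> norm v" and M: "norm v \<le> M"
  shows "\<bar>varifold_density w x' v' - varifold_density w x v\<bar>
    \<le> \<eta> * (3 * B * (1 + 2 / a) * (M + 1) + B)"
proof -
  have "v \<noteq> 0" "v' \<noteq> 0"
    using a assms(6) v norm_triangle_ineq2[of v v'] by (auto simp: norm_minus_commute)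
  then have X: "(x', sgn v') \<in> Xsp" "(x, sgn v) \<in> Xsp"
    by (auto simp: Xsp_def norm_sgn)
  have B: "0 \<le> B"
    using C01_abs_le[OF w X(2)] by linarith
  have "norm (sgn v' - sgn v) \<le> 2 * norm (v' - v) / norm v"
    by (rule norm_sgn_diff_le) fact+
  also have "\<dots> \<le> 2 * \<eta> / a"
    using v a order_trans[OF norm_ge_zero v] by (intro frac_le) auto
  finally have sgn: "norm (sgn v' - sgn v) \<le> 2 * \<eta> / a" .
  moreover have "2 * \<eta> / a \<le> 1"
    using assms(6) a by simp
  ultimately have sgn_le_1: "norm (sgn v' - sgn v) \<le> 1"
    by linarith
  have "\<bar>w (x', sgn v') - w (x, sgn v)\<bar> \<le> 3 * B * (norm (x' - x) + norm (sgn v' - sgn v))"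
    by (rule C01_lipschitz[OF w X sgn_le_1])
  also have "\<dots> \<le> 3 * B * (\<eta> + 2 * \<eta> / a)"
    using x sgn B by (intro mult_left_mono) auto
  finally have lip: "\<bar>w (x', sgn v') - w (x, sgn v)\<bar> \<le> 3 * B * (1 + 2 / a) * \<eta>"
    by (simp add: algebra_simps)
  have speed: "norm v' \<le> M + 1" "\<bar>norm v' - norm v\<bar> \<le> \<eta>"
    using norm_triangle_ineq2[of v' v] norm_triangle_ineq3[of v' v] v M assms(5) by linarith+
  have "varifold_density w x' v' - varifold_density w x v
      = (w (x', sgn v') - w (x, sgn v)) * norm v' + w (x, sgn v) * (norm v' - norm v)"
    unfolding varifold_density_def by (simp add: algebra_simps)
  also have "\<bar>\<dots>\<bar> \<le> 3 * B * (1 + 2 / a) * \<eta> * (M + 1) + B * \<eta>"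
    using lip speed C01_abs_le[OF w X(2)] B a
    by (intro order_trans[OF abs_triangle_ineq] add_mono)
       (auto simp: abs_mult intro!: mult_mono)
  finally show ?thesis
    by (simp add: algebra_simps)
qed

lemma C1_immersion_continuous_on:
  assumes "C1_immersion c"
  shows "continuous_on {0..1} c" and "continuous_on {0..1} (dtheta c)"
  using assms differentiable_imp_continuous_within
  unfolding C1_immersion_def continuous_on_eq_continuous_within by blast+

lemma C1_immersion_speed_bounds:
  assumes "C1_immersion c"
  obtains a M where "0 < a" "\<And>t. t \<in> {0..1} \<Longrightarrow> a \<le> norm (dtheta c t) \<and> norm (dtheta c t) \<le> M"
proof -
  have cont: "continuous_on {0..1} (\<lambda>t. norm (dtheta c t))"
    using C1_immersion_continuous_on(2)[OF assms] by (intro continuous_intros)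
  obtain t0 where t0: "t0 \<in> {0..1}" "\<And>t. t \<in> {0..1} \<Longrightarrow> norm (dtheta c t0) \<le> norm (dtheta c t)"
    using continuous_attains_inf[OF compact_Icc _ cont] by auto
  obtain t1 where "\<forall>t\<in>{0..1}. norm (dtheta c t) \<le> norm (dtheta c t1)"
    using continuous_attains_sup[OF compact_Icc _ cont] by auto
  moreover have "0 < norm (dtheta c t0)"
    using assms t0(1) unfolding C1_immersion_def by auto
  ultimately show ?thesis
    using that t0(2) by blast
qed

lemma C1_immersion_continuous_on_density:
  assumes "C1_immersion c" "continuous_on Xsp w"
  shows "continuous_on {0..1} (\<lambda>t. varifold_density w (c t) (dtheta c t))"
proof -
  have nz: "\<forall>t\<in>{0..1}. dtheta c t \<noteq> 0"
    using assms(1) unfolding C1_immersion_def by auto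
  have "continuous_on {0..1} (\<lambda>t. w (c t, sgn (dtheta c t)))"
  proof (rule continuous_on_compose2[OF assms(2)])
    show "continuous_on {0..1} (\<lambda>t. (c t, sgn (dtheta c t)))"
      using C1_immersion_continuous_on[OF assms(1)] nz by (intro continuous_intros)
    show "(\<lambda>t. (c t, sgn (dtheta c t))) ` {0..1} \<subseteq> Xsp"
      using nz by (auto simp: Xsp_def norm_sgn)
  qed
  then show ?thesis
    unfolding varifold_density_def
    using C1_immersion_continuous_on(2)[OF assms(1)] by (intro continuous_intros)
qed

definition curve_mu ::
    "(real \<Rightarrow> 'a::euclidean_space) \<Rightarrow> (real \<Rightarrow> real) \<Rightarrow> ('a \<times> 'a \<Rightarrow> real) \<Rightarrow> real" where
  "curve_mu c \<rho> w = (LINT t:{0..1}|lborel. \<rho> t * varifold_density w (c t) (dtheta c t))"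

lemma mu_int_eq_sum_curve_mu: "mu_int K c \<rho> = (\<lambda>w. \<Sum>k\<in>{1..K}. curve_mu (c k) (\<rho> k) w)"
  unfolding mu_int_def curve_mu_def varifold_density_def
  by (simp add: scaleR_inverse_norm_eq_sgn mult.assoc)

lemma curve_mu_integrable:
  assumes "bounded_variation_01 \<rho>" "C1_immersion c" "C01 w"
  shows "set_integrable lborel {0..1} (\<lambda>t. \<rho> t * varifold_density w (c t) (dtheta c t))"
  using assms by (intro bounded_variation_01_mult_continuous_integrable C1_immersion_continuous_on_density
      C01_continuous_on_Xsp)

lemma set_integral_weighted_diff_le:
  fixes r r' F F' :: "'a \<Rightarrow> real"
  assumes "set_integrable M S (\<lambda>t. r' t * F' t)" "set_integrable M S (\<lambda>t. r t * F t)"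
    and "set_integrable M S r'" "set_integrable M S r"
    and "\<And>t. t \<in> S \<Longrightarrow> \<bar>F' t\<bar> \<le> G" "\<And>t. t \<in> S \<Longrightarrow> \<bar>F' t - F t\<bar> \<le> e"
    and "\<And>t. t \<in> S \<Longrightarrow> 0 \<le> r t"
  shows "\<bar>(LINT t:S|M. r' t * F' t) - (LINT t:S|M. r t * F t)\<bar>
    \<le> G * (LINT t:S|M. \<bar>r' t - r t\<bar>) + e * (LINT t:S|M. r t)"
proof -
  have diff: "set_integrable M S (\<lambda>t. r' t * F' t - r t * F t)"
    using assms(1,2) by (rule set_integral_diff)
  have dr: "set_integrable M S (\<lambda>t. \<bar>r' t - r t\<bar>)"
    using assms(3,4) by (intro set_integrable_abs set_integral_diff)
  have pointwise: "\<bar>r' t * F' t - r t * F t\<bar> \<le> G * \<bar>r' t - r t\<bar> + e * r t" if "t \<in> S" for t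
  proof -
    have "r' t * F' t - r t * F t = (r' t - r t) * F' t + r t * (F' t - F t)"
      by (simp add: algebra_simps)
    also have "\<bar>\<dots>\<bar> \<le> \<bar>r' t - r t\<bar> * G + r t * e"
      using assms(5-7)[OF that]
      by (intro order_trans[OF abs_triangle_ineq] add_mono) (auto simp: abs_mult intro: mult_mono)
    finally show ?thesis by (simp add: algebra_simps)
  qed
  have "\<bar>(LINT t:S|M. r' t * F' t) - (LINT t:S|M. r t * F t)\<bar> = \<bar>LINT t:S|M. r' t * F' t - r t * F t\<bar>"
    using assms(1,2) by simp
  also have "\<dots> \<le> (LINT t:S|M. \<bar>r' t * F' t - r t * F t\<bar>)"
    using set_integral_norm_bound[OF diff] by simp
  also have "\<dots> \<le> (LINT t:S|M. G * \<bar>r' t - r t\<bar> + e * r t)"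
    using diff dr assms(4) pointwise by (intro set_integral_mono set_integrable_abs) auto
  also have "\<dots> = G * (LINT t:S|M. \<bar>r' t - r t\<bar>) + e * (LINT t:S|M. r t)"
    using dr assms(4) by simp
  finally show ?thesis .
qed

lemma curve_mu_diff_le:
  fixes c c' :: "real \<Rightarrow> 'a::euclidean_space"
  assumes C1: "C1_immersion c'" "C1_immersion c" and BV: "bounded_variation_01 \<rho>'" "BV_nonneg \<rho>"
    and w: "C01 w" "C01_norm w \<le> B"
    and close: "\<And>t. t \<in> {0..1} \<Longrightarrow> norm (c' t - c t) \<le> \<eta> \<and> norm (dtheta c' t - dtheta c t) \<le> \<eta>"
    and \<eta>: "\<eta> \<le> 1" "2 * \<eta> \<le> a" "0 < a"
    and speed: "\<And>t. t \<in> {0..1} \<Longrightarrow> a \<le> norm (dtheta c t) \<and> norm (dtheta c t) \<le> M"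
  shows "\<bar>curve_mu c' \<rho>' w - curve_mu c \<rho> w\<bar>
    \<le> B * (M + 1) * (LINT t:{0..1}|lborel. \<bar>\<rho>' t - \<rho> t\<bar>)
      + \<eta> * (3 * B * (1 + 2 / a) * (M + 1) + B) * (LINT t:{0..1}|lborel. \<rho> t)"
  unfolding curve_mu_def
proof (rule set_integral_weighted_diff_le)
  show "set_integrable lborel {0..1} (\<lambda>t. \<rho>' t * varifold_density w (c' t) (dtheta c' t))"
    "set_integrable lborel {0..1} (\<lambda>t. \<rho> t * varifold_density w (c t) (dtheta c t))"
    using curve_mu_integrable BV C1 w unfolding BV_nonneg_iff by blast+
  show "set_integrable lborel {0..1} \<rho>'" "set_integrable lborel {0..1} \<rho>"
    using bounded_variation_01_mult_continuous_integrable[of _ "\<lambda>_. 1"] BV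
    unfolding BV_nonneg_iff by simp_all
  fix t :: real assume t: "t \<in> {0..1}"
  show "0 \<le> \<rho> t"
    using BV(2) t unfolding BV_nonneg_def by blast
  show "\<bar>varifold_density w (c' t) (dtheta c' t) - varifold_density w (c t) (dtheta c t)\<bar>
      \<le> \<eta> * (3 * B * (1 + 2 / a) * (M + 1) + B)"
    using close[OF t] speed[OF t] \<eta> by (intro varifold_density_diff_le[OF w]) auto
  have nz: "dtheta c' t \<noteq> 0"
    using C1(1) t unfolding C1_immersion_def by blast
  then have "(c' t, sgn (dtheta c' t)) \<in> Xsp"
    by (simp add: Xsp_def norm_sgn)
  then have B: "0 \<le> B"
    using C01_abs_le[OF w] by force
  from nz have "\<bar>varifold_density w (c' t) (dtheta c' t)\<bar> \<le> B * norm (dtheta c' t)"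
    by (rule varifold_density_abs_le[OF w])
  also have "\<dots> \<le> B * (M + 1)"
    using close[OF t] speed[OF t] \<eta> B norm_triangle_ineq2[of "dtheta c' t" "dtheta c t"]
    by (intro mult_left_mono) auto
  finally show "\<bar>varifold_density w (c' t) (dtheta c' t)\<bar> \<le> B * (M + 1)" .
qed

lemma curve_mu_uniform_limit:
  fixes cm :: "nat \<Rightarrow> real \<Rightarrow> 'a::euclidean_space"
  assumes C1: "\<And>m. C1_immersion (cm m)" "C1_immersion c"
    and lim_c: "uniform_limit {0..1} cm c sequentially"
    and lim_dc: "uniform_limit {0..1} (\<lambda>m. dtheta (cm m)) (dtheta c) sequentially"
    and BV: "\<And>m. bounded_variation_01 (\<rho>m m)" "BV_nonneg \<rho>"
    and lim_\<rho>: "(\<lambda>m. LINT t:{0..1}|lborel. \<bar>\<rho>m m t - \<rho> t\<bar>) \<longlonglongrightarrow> 0"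
    and B: "0 \<le> B"
  shows "uniform_limit {w. C01 w \<and> C01_norm w \<le> B}
    (\<lambda>m. curve_mu (cm m) (\<rho>m m)) (curve_mu c \<rho>) sequentially"
proof (rule uniform_limitI)
  fix \<epsilon> :: real assume "0 < \<epsilon>"
  obtain a M where a: "0 < a"
    and speed: "\<And>t. t \<in> {0..1} \<Longrightarrow> a \<le> norm (dtheta c t) \<and> norm (dtheta c t) \<le> M"
    using C1_immersion_speed_bounds[OF C1(2)] by blast
  define Q where "Q = 3 * B * (1 + 2 / a) * (M + 1) + B"
  define R where "R = (LINT t:{0..1}|lborel. \<rho> t)"
  have "0 \<le> M" using speed[of 0] a by auto
  moreover have "0 \<le> R"
    unfolding R_def set_lebesgue_integral_def using BV(2)
    by (intro integral_nonneg_AE AE_I2) (auto simp: BV_nonneg_def split: split_indicator)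
  ultimately have QR: "0 \<le> Q * R"
    unfolding Q_def using B a by simp
  define \<eta> where "\<eta> = min (min 1 (a / 2)) (\<epsilon> / (2 * (Q * R + 1)))"
  have \<eta>: "0 < \<eta>" "\<eta> \<le> 1" "2 * \<eta> \<le> a" "\<eta> * (Q * R) < \<epsilon>"
  proof -
    show "0 < \<eta>" "\<eta> \<le> 1" "2 * \<eta> \<le> a"
      unfolding \<eta>_def using \<open>0 < \<epsilon>\<close> a QR by auto
    have "\<eta> \<le> \<epsilon> / (2 * (Q * R + 1))"
      unfolding \<eta>_def by simp
    then have "\<eta> * (Q * R + 1) \<le> \<epsilon> / 2"
      using QR by (simp add: pos_le_divide_eq algebra_simps)
    then show "\<eta> * (Q * R) < \<epsilon>"
      using \<open>0 < \<epsilon>\<close> \<open>0 < \<eta>\<close> by (simp add: algebra_simps)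
  qed
  have "\<forall>\<^sub>F m in sequentially. \<forall>t\<in>{0..1}. dist (cm m t) (c t) < \<eta>"
    "\<forall>\<^sub>F m in sequentially. \<forall>t\<in>{0..1}. dist (dtheta (cm m) t) (dtheta c t) < \<eta>"
    using uniform_limitD[OF lim_c \<eta>(1)] uniform_limitD[OF lim_dc \<eta>(1)] by auto
  moreover have "\<forall>\<^sub>F m in sequentially.
      B * (M + 1) * (LINT t:{0..1}|lborel. \<bar>\<rho>m m t - \<rho> t\<bar>) < \<epsilon> - \<eta> * (Q * R)"
    using \<eta>(4) by (intro order_tendstoD(2)[OF tendsto_mult_right_zero[OF lim_\<rho>]]) simp
  ultimately show "\<forall>\<^sub>F m in sequentially. \<forall>w\<in>{w. C01 w \<and> C01_norm w \<le> B}.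
      dist (curve_mu (cm m) (\<rho>m m) w) (curve_mu c \<rho> w) < \<epsilon>"
  proof eventually_elim
    case (elim m)
    show ?case
    proof safe
      fix w :: "'a \<times> 'a \<Rightarrow> real"
      assume w: "C01 w" "C01_norm w \<le> B"
      have "\<bar>curve_mu (cm m) (\<rho>m m) w - curve_mu c \<rho> w\<bar>
          \<le> B * (M + 1) * (LINT t:{0..1}|lborel. \<bar>\<rho>m m t - \<rho> t\<bar>) + \<eta> * Q * R"
        unfolding Q_def R_def using elim \<eta> a speed
        by (intro curve_mu_diff_le[OF C1 BV w]) (auto simp: dist_norm less_imp_le)
      then show "dist (curve_mu (cm m) (\<rho>m m) w) (curve_mu c \<rho> w) < \<epsilon>"
        using elim(3) by (simp add: dist_real_def algebra_simps)
    qed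
  qed
qed

section \<open>Convergence in the kernel norm\<close>

lemma uniform_limit_sum:
  fixes f :: "'i \<Rightarrow> 'n \<Rightarrow> 'a \<Rightarrow> 'b::real_normed_vector"
  assumes "finite I" "\<And>i. i \<in> I \<Longrightarrow> uniform_limit W (f i) (g i) F"
  shows "uniform_limit W (\<lambda>n x. \<Sum>i\<in>I. f i n x) (\<lambda>x. \<Sum>i\<in>I. g i x) F"
  using assms by (induction I rule: finite_induct) (auto intro!: uniform_limit_add uniform_limit_const)

lemma Sup_diff_tendsto_0_if_uniform_limit:
  fixes I :: "nat \<Rightarrow> 'a \<Rightarrow> real"
  assumes lim: "uniform_limit (Collect P) I I0 sequentially" and "P w0"
  shows "(\<lambda>m. Sup {I m w - I0 w | w. P w}) \<longlonglongrightarrow> 0"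
proof (rule tendstoI)
  fix \<epsilon> :: real assume "0 < \<epsilon>"
  then have "\<forall>\<^sub>F m in sequentially. \<forall>w\<in>Collect P. dist (I m w) (I0 w) < \<epsilon> / 2"
    by (intro uniform_limitD[OF lim]) simp
  then show "\<forall>\<^sub>F m in sequentially. dist (Sup {I m w - I0 w | w. P w}) 0 < \<epsilon>"
  proof (rule eventually_mono)
    fix m assume close: "\<forall>w\<in>Collect P. dist (I m w) (I0 w) < \<epsilon> / 2"
    have bound: "x \<le> \<epsilon> / 2" if x_mem: "x \<in> {I m w - I0 w | w. P w}" for x
    proof -
      obtain w where "P w" and x: "x = I m w - I0 w"
        using x_mem by blast
      then have "dist (I m w) (I0 w) < \<epsilon> / 2"
        using close by simp
      then show ?thesis
        unfolding x dist_real_def by linarith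
    qed
    have "I m w0 - I0 w0 \<le> Sup {I m w - I0 w | w. P w}"
      using \<open>P w0\<close> bound by (intro cSup_upper bdd_aboveI[of _ "\<epsilon> / 2"]) auto
    moreover have "Sup {I m w - I0 w | w. P w} \<le> \<epsilon> / 2"
      using \<open>P w0\<close> bound by (intro cSup_least) auto
    moreover have "dist (I m w0) (I0 w0) < \<epsilon> / 2"
      using close \<open>P w0\<close> by simp
    ultimately show "dist (Sup {I m w - I0 w | w. P w}) 0 < \<epsilon>"
      unfolding dist_real_def by linarith
  qed
qed

lemma rkhs_zero_in_unit_ball:
  assumes "is_rkhs Kr Hs ip"
  shows "(\<lambda>_. 0) \<in> Hs \<and> hnorm ip (\<lambda>_. 0) \<le> 1"
proof -
  have zero: "(\<lambda>_. 0) \<in> Hs"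
    using assms unfolding is_rkhs_def by blast
  have "\<forall>f\<in>Hs. \<forall>g\<in>Hs. \<forall>h\<in>Hs. \<forall>r s. ip (\<lambda>q. r * f q + s * g q) h = r * ip f h + s * ip g h"
    using assms unfolding is_rkhs_def by blast
  from this[rule_format, OF zero zero zero, of 0 0] show ?thesis
    using zero by (simp add: hnorm_def)
qed

lemma rkhs_unit_ball_C01_bounded:
  assumes "is_rkhs Kr Hs ip" "cont_embedded_C01 Hs ip"
  obtains B where "0 \<le> B" "{w. w \<in> Hs \<and> hnorm ip w \<le> 1} \<subseteq> {w. C01 w \<and> C01_norm w \<le> B}"
proof -
  obtain C where C: "\<And>w. w \<in> Hs \<Longrightarrow> C01 w \<and> C01_norm w \<le> C * hnorm ip w"
    using assms(2) unfolding cont_embedded_C01_def by blast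
  have "C01 w \<and> C01_norm w \<le> max C 0" if "w \<in> Hs" "hnorm ip w \<le> 1" for w
  proof -
    have "0 \<le> hnorm ip w"
      using assms(1) that(1) unfolding is_rkhs_def hnorm_def by simp
    then have "C * hnorm ip w \<le> max C 0"
      using that(2) by (cases "0 \<le> C") (auto intro: mult_left_le mult_nonpos_nonneg)
    then show ?thesis
      using C[OF that(1)] by auto
  qed
  then show ?thesis
    using that[of "max C 0"] by auto
qed

theorem lemma4p4:
  fixes n K :: nat
    and A :: "nat \<Rightarrow> nat \<Rightarrow> nat"
    and Kr :: "'a::euclidean_space \<times> 'a \<Rightarrow> 'a \<times> 'a \<Rightarrow> real"
    and Hs :: "('a \<times> 'a \<Rightarrow> real) set"
    and ip :: "('a \<times> 'a \<Rightarrow> real) \<Rightarrow> ('a \<times> 'a \<Rightarrow> real) \<Rightarrow> real"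
    and cm :: "nat \<Rightarrow> nat \<Rightarrow> real \<Rightarrow> 'a"
    and \<rho>m :: "nat \<Rightarrow> nat \<Rightarrow> real \<Rightarrow> real"
    and c :: "nat \<Rightarrow> real \<Rightarrow> 'a"
    and \<rho> :: "nat \<Rightarrow> real \<Rightarrow> real"
  assumes "n \<ge> 2" and "K \<ge> 1"
    and "\<forall>i\<in>{1..2*K}. \<forall>j\<in>{1..2*K}. A i j \<in> {0, 1}"
    and "pos_def_kernel Kr" and "is_rkhs Kr Hs ip"
    and "cont_embedded_C01 Hs ip"
    and "\<forall>m. graph_n n K A (cm m)"
    and "\<forall>m. \<forall>k\<in>{1..K}. BV_nonneg (\<rho>m m k)"
    and "\<forall>m. \<forall>k\<in>{1..K}. C1_immersion (cm m k)"
    and "\<forall>k\<in>{1..K}. C1_immersion (c k)"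
    and "\<forall>k\<in>{1..K}. uniform_limit {0..1} (\<lambda>m. cm m k) (c k) sequentially"
    and "\<forall>k\<in>{1..K}. uniform_limit {0..1} (\<lambda>m. dtheta (cm m k)) (dtheta (c k)) sequentially"
    and "\<forall>k\<in>{1..K}. BV_nonneg (\<rho> k)"
    and "\<forall>k\<in>{1..K}. (\<lambda>m. LINT t:{0..1}|lborel. \<bar>\<rho>m m k t - \<rho> k t\<bar>) \<longlonglongrightarrow> 0"
  shows "(\<lambda>m. V_dist Hs ip (mu_int K (cm m) (\<rho>m m)) (mu_int K c \<rho>)) \<longlonglongrightarrow> 0"
proof -
  obtain B where "0 \<le> B" and ball: "{w. w \<in> Hs \<and> hnorm ip w \<le> 1} \<subseteq> {w. C01 w \<and> C01_norm w \<le> B}"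
    using rkhs_unit_ball_C01_bounded[OF assms(5,6)] .
  have "uniform_limit {w. w \<in> Hs \<and> hnorm ip w \<le> 1}
      (\<lambda>m. curve_mu (cm m k) (\<rho>m m k)) (curve_mu (c k) (\<rho> k)) sequentially" if "k \<in> {1..K}" for k
    using that assms(8-14) \<open>0 \<le> B\<close>
    by (intro uniform_limit_on_subset[OF curve_mu_uniform_limit ball]) (auto simp: BV_nonneg_iff)
  then have "uniform_limit {w. w \<in> Hs \<and> hnorm ip w \<le> 1}
      (\<lambda>m. mu_int K (cm m) (\<rho>m m)) (mu_int K c \<rho>) sequentially"
    unfolding mu_int_eq_sum_curve_mu by (intro uniform_limit_sum) auto
  then show ?thesis
    unfolding V_dist_def using rkhs_zero_in_unit_ball[OF assms(5)]
    by (intro Sup_diff_tendsto_0_if_uniform_limit) auto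
qed

end
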